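(* For every $n \geq 1$, every $c \in \{1,\ldots,n\}$, every $p=(p_1,\ldots,p_n) \in (0,1)^n$ with $p_1+\cdots+p_n \leq 1$, and every integer $k \geq 0$, $$\Pr\{T_{c,n}(p) > k\} = \sum_{i=0}^{c-1} (-1)^{c-1-i} \binom{n-i-1}{n-c} \sum_{J \in S_{i,n}} (p_0 + P_J)^k.$$
   Context: Let $p=(p_1,\ldots,p_n)$ with $p_i \in (0,1)$ and $p_1+\cdots+p_n \le 1$, and set $p_0 = 1-(p_1+\cdots+p_n)$. Coupons are drawn independently, one at each time $1,2,\ldots$, from $\{0,1,\ldots,n\}$, coupon $i$ being drawn with probability $p_i$; coupon $0$ (the null coupon) never belongs to the collection. For $1 \le c \le n$, $T_{c,n}(p)$ is the number of draws needed until, for the first time, $c$ distinct coupons among $\{1,\ldots,n\}$ have been drawn. For $J \subseteq \{1,\ldots,n\}$, $P_J = \sum_{j\in J} p_j$ with $P_\emptyset = 0$, and $S_{i,n} = \{J \subseteq \{1,\ldots,n\} : |J| = i\}$. Convention: $0^0=1$. *)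

theory Defs
  imports "HOL-Probability.Probability" "HOL-Probability.Stream_Space"
begin

text \<open>Coupon distribution on {0,...,n}: coupon i (1 \<le> i \<le> n) has probability p i,
  the null coupon 0 has probability p_0 = 1 - (p 1 + ... + p n).\<close>
definition coupon_pmf :: "nat \<Rightarrow> (nat \<Rightarrow> real) \<Rightarrow> nat pmf" where
  "coupon_pmf n p = embed_pmf
     (\<lambda>i. if i = 0 then 1 - sum p {1..n} else if i \<le> n then p i else 0)"

text \<open>The i.i.d. sequence of draws; position j of the stream is the draw at time j+1.\<close>
definition coupon_space :: "nat \<Rightarrow> (nat \<Rightarrow> real) \<Rightarrow> nat stream measure" where
  "coupon_space n p = stream_space (measure_pmf (coupon_pmf n p))"

definition collected :: "nat \<Rightarrow> nat stream \<Rightarrow> nat \<Rightarrow> nat" where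
  "collected n \<omega> t = card ({\<omega> !! j | j. j < t} \<inter> {1..n})"

definition T_cn :: "nat \<Rightarrow> nat \<Rightarrow> nat stream \<Rightarrow> enat" where
  "T_cn c n \<omega> = (if \<exists>t. c \<le> collected n \<omega> t
                   then enat (LEAST t. c \<le> collected n \<omega> t) else \<infinity>)"

end

theory Submission
  imports Defs
begin

(*
  Let D be the set of non-null coupons seen in the first k draws.  Then
  T_{c,n} > k iff |D| < c, and the first k draws all avoid {1..n} - J
  iff D \<subseteq> J, an event of probability (p_0 + P_J)^k.  The theorem is
  therefore the expectation of the pointwise identity

    [|D| < c] = \<Sum>_{i<c} (-1)^(c-1-i) C(n-i-1, n-c) #{J : |J| = i, D \<subseteq> J}.
*)

text \<open>An alternating Vandermonde sum: for M < m,
  \<Sum>_{j \<le> M} (-1)^(M-j) C(m-1-j, M-j) C(m, j) = 1.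
  It is Vandermonde's convolution for C(m, j) and C(M-m, M-j), using
  upper negation C(M-m, M-j) = (-1)^(M-j) C(m-1-j, M-j).\<close>
lemma alternating_vandermonde:
  fixes m M :: nat
  assumes "M < m"
  shows "(\<Sum>j=0..M. (-1::real)^(M-j) * real ((m-1-j) choose (M-j)) * real (m choose j)) = 1"
proof -
  have "(\<Sum>j=0..M. (-1::real)^(M-j) * real ((m-1-j) choose (M-j)) * real (m choose j))
      = (\<Sum>j=0..M. (real m gchoose j) * ((real M - real m) gchoose (M - j)))"
  proof (rule sum.cong[OF refl])
    fix j assume j: "j \<in> {0..M}"
    have e: "of_nat (M-j) - (real M - real m) - 1 = real (m-1-j)"
      using j assms by (simp add: of_nat_diff)
    have "(real M - real m) gchoose (M - j) = (-1)^(M-j) * real ((m-1-j) choose (M-j))"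
      by (subst gbinomial_negated_upper) (simp only: e binomial_gbinomial)
    then show "(-1::real)^(M-j) * real ((m-1-j) choose (M-j)) * real (m choose j)
       = (real m gchoose j) * ((real M - real m) gchoose (M - j))"
      by (simp add: binomial_gbinomial)
  qed
  also have "\<dots> = (real m + (real M - real m)) gchoose M"
    by (rule gbinomial_Vandermonde)
  also have "\<dots> = 1" by (simp add: binomial_gbinomial[symmetric])
  finally show ?thesis .
qed

text \<open>The coefficient identity behind the theorem: for d < c \<le> n,
  \<Sum>_{d \<le> i < c} (-1)^(c-1-i) C(n-i-1, n-c) C(n-d, i-d) = 1.
  Shifting i = j + d and using C(n-d-1-j, n-c) = C(n-d-1-j, c-1-d-j)
  reduces it to the alternating Vandermonde sum with m = n-d, M = c-1-d.\<close>
lemma alternating_binomial_sum: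
  fixes n c d :: nat
  assumes "d < c" "c \<le> n"
  shows "(\<Sum>i=0..c-1. (-1::real)^(c-1-i) * real ((n-i-1) choose (n-c)) *
            (if d \<le> i then real ((n-d) choose (i-d)) else 0)) = 1"
proof -
  let ?f = "\<lambda>i. (-1::real)^(c-1-i) * real ((n-i-1) choose (n-c)) *
            (if d \<le> i then real ((n-d) choose (i-d)) else 0)"
  have "(\<Sum>i=0..c-1. ?f i) = (\<Sum>i=d..c-1. ?f i)"
    by (rule sum.mono_neutral_right) (use assms in auto)
  also have "\<dots> = (\<Sum>i=0+d..(c-1-d)+d. ?f i)" using assms by simp
  also have "\<dots> = (\<Sum>j=0..c-1-d. ?f (j+d))" by (rule sum.shift_bounds_cl_nat_ivl)
  also have "\<dots> = (\<Sum>j=0..c-1-d. (-1::real)^((c-1-d)-j) *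
                     real (((n-d)-1-j) choose ((c-1-d)-j)) * real ((n-d) choose j))"
  proof (rule sum.cong[OF refl])
    fix j assume j: "j \<in> {0..c-1-d}"
    have "(n-(j+d)-1) choose (n-c) = ((n-d)-1-j) choose (((n-d)-1-j) - (n-c))"
      using j assms by (subst binomial_symmetric) (auto simp: ac_simps)
    moreover have "((n-d)-1-j) - (n-c) = (c-1-d)-j" using j assms by auto
    ultimately show "?f (j+d) = (-1::real)^((c-1-d)-j) *
                       real (((n-d)-1-j) choose ((c-1-d)-j)) * real ((n-d) choose j)"
      by (simp add: ac_simps)
  qed
  also have "\<dots> = 1" by (rule alternating_vandermonde) (use assms in auto)
  finally show ?thesis .
qed

text \<open>The i-subsets of {1..n} containing a fixed D \<subseteq> {1..n} are
  D \<union> K for the (i-|D|)-subsets K of the complement, so there are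
  C(n-|D|, i-|D|) of them (none if |D| > i).\<close>
lemma card_supersets:
  fixes D :: "nat set"
  assumes "D \<subseteq> {1..n}"
  shows "card {J. J \<subseteq> {1..n} \<and> card J = i \<and> D \<subseteq> J}
       = (if card D \<le> i then (n - card D) choose (i - card D) else 0)"
proof (cases "card D \<le> i")
  case False
  have "{J. J \<subseteq> {1..n} \<and> card J = i \<and> D \<subseteq> J} = {}"
    using False card_mono[of _ D] finite_subset[of _ "{1..n}"] by fastforce
  with False show ?thesis by simp
next
  case True
  have fD: "finite D" using assms finite_subset by blast
  let ?K = "{K. K \<subseteq> {1..n} - D \<and> card K = i - card D}"
  have eq: "{J. J \<subseteq> {1..n} \<and> card J = i \<and> D \<subseteq> J} = (\<lambda>K. K \<union> D) ` ?K"
  proof (intro equalityI subsetI)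
    fix J assume "J \<in> {J. J \<subseteq> {1..n} \<and> card J = i \<and> D \<subseteq> J}"
    then have J: "J \<subseteq> {1..n}" "card J = i" "D \<subseteq> J" by auto
    have "card (J - D) = i - card D" using J fD by (simp add: card_Diff_subset)
    moreover have "J = (J - D) \<union> D" using J by auto
    ultimately show "J \<in> (\<lambda>K. K \<union> D) ` ?K" using J by blast
  next
    fix J assume "J \<in> (\<lambda>K. K \<union> D) ` ?K"
    then obtain K where K: "K \<subseteq> {1..n} - D" "card K = i - card D" "J = K \<union> D" by auto
    have "card J = card K + card D"
      using K fD finite_subset[OF K(1)] card_Un_disjoint[of K D] by auto
    then show "J \<in> {J. J \<subseteq> {1..n} \<and> card J = i \<and> D \<subseteq> J}" using K True assms by auto
  qed
  have "inj_on (\<lambda>K. K \<union> D) ?K" by (rule inj_onI) blast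
  then have "card {J. J \<subseteq> {1..n} \<and> card J = i \<and> D \<subseteq> J} = card ?K"
    unfolding eq by (rule card_image)
  also have "\<dots> = card ({1..n} - D) choose (i - card D)" by (rule n_subsets) simp
  also have "card ({1..n} - D) = n - card D" using assms fD by (simp add: card_Diff_subset)
  finally show ?thesis using True by simp
qed

lemma indicator_card_less:
  fixes D :: "nat set"
  assumes "D \<subseteq> {1..n}" "1 \<le> c" "c \<le> n"
  shows "(if card D < c then 1 else 0 :: real) =
    (\<Sum>i = 0..c-1. (-1) ^ (c - 1 - i) * real ((n - i - 1) choose (n - c)) *
              (\<Sum>J \<in> {J. J \<subseteq> {1..n} \<and> card J = i}. if D \<subseteq> J then 1 else 0))"
proof -
  have supersets: "(\<Sum>J \<in> {J. J \<subseteq> {1..n} \<and> card J = i}. if D \<subseteq> J then 1 else 0 :: real)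
     = (if card D \<le> i then real ((n - card D) choose (i - card D)) else 0)" for i
  proof -
    have "(\<Sum>J \<in> {J. J \<subseteq> {1..n} \<and> card J = i}. if D \<subseteq> J then 1 else 0 :: real)
        = real (card {J. J \<subseteq> {1..n} \<and> card J = i \<and> D \<subseteq> J})"
      by (simp add: sum.If_cases Int_def conj_ac)
    then show ?thesis using card_supersets[OF assms(1), of i] by simp
  qed
  show ?thesis
  proof (cases "card D < c")
    case True
    then show ?thesis
      unfolding supersets using alternating_binomial_sum[OF True assms(3)] by simp
  next
    case False
    then have "\<not> card D \<le> i" if "i \<in> {0..c-1}" for i using that assms(2) by auto
    then show ?thesis unfolding supersets using False by simp
  qed
qed

lemma sets_stream_prefix_in:
  "{\<omega> \<in> space (stream_space (measure_pmf q)). \<forall>j<k. \<omega> !! j \<in> S}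
     \<in> sets (stream_space (measure_pmf q))"
proof -
  let ?Q = "stream_space (measure_pmf q)"
  have "{\<omega> \<in> space ?Q. \<forall>j\<in>{..<k}. \<omega> !! j \<in> S} \<in> sets ?Q"
  proof (rule sets.sets_Collect_finite_All)
    fix j
    have "{\<omega> \<in> space ?Q. \<omega> !! j \<in> S} = (\<lambda>\<omega>. \<omega> !! j) -` S \<inter> space ?Q" by blast
    then show "{\<omega> \<in> space ?Q. \<omega> !! j \<in> S} \<in> sets ?Q"
      using measurable_sets[OF measurable_snth, of S "measure_pmf q" j] by simp
  qed (rule finite_lessThan)
  then show ?thesis by (simp only: Ball_def lessThan_iff)
qed

text \<open>By independence of the draws, this event has probability P(S)^k;
  the induction peels off the first draw.\<close>
lemma emeasure_stream_prefix_in: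
  "emeasure (stream_space (measure_pmf q))
     {\<omega> \<in> space (stream_space (measure_pmf q)). \<forall>j<k. \<omega> !! j \<in> S}
   = emeasure (measure_pmf q) S ^ k"
proof (induction k)
  case 0
  interpret prob_space "stream_space (measure_pmf q)"
    by (rule prob_space.prob_space_stream_space[OF prob_space_measure_pmf])
  show ?case by (simp add: emeasure_space_1)
next
  case (Suc k)
  let ?Q = "stream_space (measure_pmf q)"
  let ?A = "\<lambda>m. {\<omega> \<in> space ?Q. \<forall>j<m. \<omega> !! j \<in> S}"
  have tail: "{x \<in> space ?Q. t ## x \<in> ?A (Suc k)} = (if t \<in> S then ?A k else {})" for t
    by (auto simp: space_stream_space All_less_Suc2)
  have "emeasure ?Q (?A (Suc k)) = (\<integral>\<^sup>+t. emeasure ?Q {x \<in> space ?Q. t ## x \<in> ?A (Suc k)} \<partial>q)"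
    by (rule prob_space.emeasure_stream_space[OF prob_space_measure_pmf sets_stream_prefix_in])
  also have "\<dots> = (\<integral>\<^sup>+t. emeasure ?Q (?A k) * indicator S t \<partial>q)"
    unfolding tail by (intro nn_integral_cong) (auto split: split_indicator)
  also have "\<dots> = emeasure ?Q (?A k) * emeasure q S"
    by (subst nn_integral_cmult) auto
  finally show ?case using Suc by (simp add: mult.commute)
qed

lemma measure_indicator_combination:
  fixes a :: "'i \<Rightarrow> real" and A :: "'j \<Rightarrow> 'a set"
  assumes "finite_measure M" "finite I" "\<And>i. finite (B i)" "\<And>j. A j \<in> sets M"
    and "\<And>\<omega>. \<omega> \<in> space M \<Longrightarrow>
           indicator E \<omega> = (\<Sum>i\<in>I. a i * (\<Sum>j\<in>B i. indicator (A j) \<omega>))"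
  shows "measure M (E \<inter> space M) = (\<Sum>i\<in>I. a i * (\<Sum>j\<in>B i. measure M (A j)))"
proof -
  interpret finite_measure M by (rule assms(1))
  have int: "integrable M (indicator (A j) :: 'a \<Rightarrow> real)" for j
    using assms(4) by (rule integrable_real_indicator) (simp add: less_top[symmetric])
  have "measure M (E \<inter> space M) = integral\<^sup>L M (indicator E :: 'a \<Rightarrow> real)" by simp
  also have "\<dots> = integral\<^sup>L M (\<lambda>\<omega>. \<Sum>i\<in>I. a i * (\<Sum>j\<in>B i. indicator (A j) \<omega>))"
    by (intro Bochner_Integration.integral_cong refl assms(5))
  also have "\<dots> = (\<Sum>i\<in>I. a i * (\<Sum>j\<in>B i. integral\<^sup>L M (indicator (A j))))"
    using int by (simp add: Bochner_Integration.integral_sum integrable_sum)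
  also have "\<dots> = (\<Sum>i\<in>I. a i * (\<Sum>j\<in>B i. measure M (A j)))"
    using assms(4) by (simp add: Int_absorb2 sets.sets_into_space)
  finally show ?thesis .
qed

lemma pmf_coupon_pmf:
  assumes "\<forall>i\<in>{1..n}. 0 \<le> p i" "sum p {1..n} \<le> 1"
  shows "pmf (coupon_pmf n p) x = (if x = 0 then 1 - sum p {1..n} else if x \<le> n then p x else 0)"
proof -
  define f where "f = (\<lambda>i. if i = 0 then 1 - sum p {1..n} else if i \<le> n then p i else 0)"
  have f_nonneg: "0 \<le> f x" for x using assms by (auto simp: f_def)
  have "(\<integral>\<^sup>+x. ennreal (f x) \<partial>count_space UNIV) = (\<Sum>x\<in>{0..n}. ennreal (f x))"
    by (rule nn_integral_count_space') (auto simp: f_def)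
  also have "\<dots> = ennreal (f 0 + (\<Sum>x\<in>{1..n}. f x))"
    using f_nonneg by (simp add: sum.atLeast_Suc_atMost)
  also have "(\<Sum>x\<in>{1..n}. f x) = sum p {1..n}" by (rule sum.cong) (auto simp: f_def)
  finally have "(\<integral>\<^sup>+x. ennreal (f x) \<partial>count_space UNIV) = 1" by (simp add: f_def)
  then have "pmf (embed_pmf f) x = f x" by (rule pmf_embed_pmf[OF f_nonneg])
  then show ?thesis by (simp add: coupon_pmf_def f_def)
qed

lemma prob_draws_avoid:
  assumes "\<forall>i\<in>{1..n}. 0 \<le> p i" "sum p {1..n} \<le> 1" "J \<subseteq> {1..n}"
  shows "measure (coupon_space n p)
           {\<omega> \<in> space (coupon_space n p). \<forall>j<k. \<omega> !! j \<notin> {1..n} - J}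
         = ((1 - sum p {1..n}) + sum p J) ^ k"
proof -
  let ?q = "coupon_pmf n p"
  interpret prob_space "coupon_space n p" unfolding coupon_space_def
    by (rule prob_space.prob_space_stream_space[OF prob_space_measure_pmf])
  have "measure ?q ({1..n} - J) = sum (pmf ?q) ({1..n} - J)"
    by (rule measure_measure_pmf_finite) simp
  also have "\<dots> = sum p ({1..n} - J)"
    by (rule sum.cong) (auto simp: pmf_coupon_pmf[OF assms(1,2)])
  also have "\<dots> = sum p {1..n} - sum p J"
    using assms(3) by (simp add: sum_diff finite_subset)
  finally have prob_draw: "measure ?q (- ({1..n} - J)) = (1 - sum p {1..n}) + sum p J"
    using measure_pmf.prob_compl[of "{1..n} - J" ?q] by (simp add: Compl_eq_Diff_UNIV)
  have nonneg: "0 \<le> (1 - sum p {1..n}) + sum p J"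
    using assms sum_nonneg[of J p] by force
  have "ennreal (measure (coupon_space n p)
          {\<omega> \<in> space (coupon_space n p). \<forall>j<k. \<omega> !! j \<notin> {1..n} - J})
      = emeasure (coupon_space n p)
          {\<omega> \<in> space (coupon_space n p). \<forall>j<k. \<omega> !! j \<notin> {1..n} - J}"
    by (simp add: emeasure_eq_measure)
  also have "\<dots> = emeasure ?q (- ({1..n} - J)) ^ k"
    using emeasure_stream_prefix_in[of ?q k "- ({1..n} - J)"]
    by (simp only: coupon_space_def Compl_iff)
  also have "\<dots> = ennreal (((1 - sum p {1..n}) + sum p J) ^ k)"
    unfolding measure_pmf.emeasure_eq_measure prob_draw by (rule ennreal_power[OF nonneg])
  finally show ?thesis using nonneg by simp
qed

text \<open>T_{c,n} exceeds k exactly when fewer than c distinct coupons of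
  {1..n} occur among the first k draws (collected n \<omega> is monotone).\<close>
lemma T_cn_greater_iff:
  "T_cn c n \<omega> > enat k \<longleftrightarrow> collected n \<omega> k < c"
proof
  assume "T_cn c n \<omega> > enat k"
  then show "collected n \<omega> k < c"
    using Least_le[of "\<lambda>t. c \<le> collected n \<omega> t" k]
    by (cases "c \<le> collected n \<omega> k") (auto simp: T_cn_def split: if_split_asm)
next
  assume less: "collected n \<omega> k < c"
  have mono: "collected n \<omega> t \<le> collected n \<omega> k" if "t \<le> k" for t
    unfolding collected_def using that by (intro card_mono) auto
  show "T_cn c n \<omega> > enat k"
  proof (cases "\<exists>t. c \<le> collected n \<omega> t")
    case True
    then have "c \<le> collected n \<omega> (LEAST t. c \<le> collected n \<omega> t)" by (rule LeastI_ex)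
    then have "\<not> (LEAST t. c \<le> collected n \<omega> t) \<le> k" using mono less by force
    then show ?thesis using True by (simp add: T_cn_def)
  qed (simp add: T_cn_def)
qed

lemma indicator_T_cn_greater:
  assumes "1 \<le> c" "c \<le> n"
  shows "indicator {\<omega>. T_cn c n \<omega> > enat k} \<omega> =
    (\<Sum>i = 0..c-1. (-1) ^ (c - 1 - i) * real ((n - i - 1) choose (n - c)) *
       (\<Sum>J \<in> {J. J \<subseteq> {1..n} \<and> card J = i}.
          indicator {\<omega>. \<forall>j<k. \<omega> !! j \<notin> {1..n} - J} \<omega> :: real))"
proof -
  define D where "D = {\<omega> !! j | j. j < k} \<inter> {1..n}"
  have avoid_iff: "(\<forall>j<k. \<omega> !! j \<notin> {1..n} - J) \<longleftrightarrow> D \<subseteq> J" for J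
    by (auto simp: D_def)
  have "indicator {\<omega>. T_cn c n \<omega> > enat k} \<omega> = (if card D < c then 1 else 0 :: real)"
    by (simp add: T_cn_greater_iff collected_def D_def)
  also have "\<dots> = (\<Sum>i = 0..c-1. (-1) ^ (c - 1 - i) * real ((n - i - 1) choose (n - c)) *
              (\<Sum>J \<in> {J. J \<subseteq> {1..n} \<and> card J = i}. if D \<subseteq> J then 1 else 0))"
    by (rule indicator_card_less) (use assms in \<open>auto simp: D_def\<close>)
  also have "\<dots> = (\<Sum>i = 0..c-1. (-1) ^ (c - 1 - i) * real ((n - i - 1) choose (n - c)) *
       (\<Sum>J \<in> {J. J \<subseteq> {1..n} \<and> card J = i}.
          indicator {\<omega>. \<forall>j<k. \<omega> !! j \<notin> {1..n} - J} \<omega>))"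
    by (simp only: indicator_def mem_Collect_eq avoid_iff of_bool_def)
  finally show ?thesis .
qed

theorem theorem1:
  fixes n c k :: nat and p :: "nat \<Rightarrow> real"
  assumes "n \<ge> 1"
    and "1 \<le> c" and "c \<le> n"
    and "\<forall>i\<in>{1..n}. 0 < p i \<and> p i < 1"
    and "sum p {1..n} \<le> 1"
  shows "measure (coupon_space n p)
           {\<omega> \<in> space (coupon_space n p). T_cn c n \<omega> > enat k}
         = (\<Sum>i = 0..c-1. (-1) ^ (c - 1 - i) * real ((n - i - 1) choose (n - c)) *
              (\<Sum>J \<in> {J. J \<subseteq> {1..n} \<and> card J = i}.
                 ((1 - sum p {1..n}) + sum p J) ^ k))"
proof -
  let ?M = "coupon_space n p"
  let ?A = "\<lambda>J. {\<omega> \<in> space ?M. \<forall>j<k. \<omega> !! j \<notin> {1..n} - J}"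
  have p_nonneg: "\<forall>i\<in>{1..n}. 0 \<le> p i" using assms(4) by auto
  have space: "space ?M = UNIV" by (simp add: coupon_space_def space_stream_space)
  have finite: "finite_measure ?M" unfolding coupon_space_def
    by (intro prob_space.finite_measure prob_space.prob_space_stream_space prob_space_measure_pmf)
  have events: "?A J \<in> sets ?M" for J
    using sets_stream_prefix_in[of "coupon_pmf n p" k "- ({1..n} - J)"]
    by (simp add: coupon_space_def)
  have "measure ?M ({\<omega>. T_cn c n \<omega> > enat k} \<inter> space ?M) =
      (\<Sum>i = 0..c-1. (-1) ^ (c - 1 - i) * real ((n - i - 1) choose (n - c)) *
         (\<Sum>J \<in> {J. J \<subseteq> {1..n} \<and> card J = i}. measure ?M (?A J)))"
    by (rule measure_indicator_combination[OF finite _ _ events])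
       (simp_all add: space indicator_T_cn_greater[OF assms(2,3)])
  also have "\<dots> = (\<Sum>i = 0..c-1. (-1) ^ (c - 1 - i) * real ((n - i - 1) choose (n - c)) *
              (\<Sum>J \<in> {J. J \<subseteq> {1..n} \<and> card J = i}. ((1 - sum p {1..n}) + sum p J) ^ k))"
    by (intro sum.cong refl arg_cong2[where f = "(*)"] prob_draws_avoid[OF p_nonneg assms(5)]) auto
  finally show ?thesis by (simp add: space Collect_conj_eq)
qed

end
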